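(* Let $\lambda>0$ and let $n\ge2$ be an integer. With the notation of the context, 1. $\displaystyle R_1(F)=\frac{e^{-n\lambda}}{2[1-e^{-\lambda}]^{n-1}}\int_0^1 I_0(2\lambda y)\,[e^{\lambda y}-1]^{n-2}\,dy+\frac{e^{-\lambda}+n-1}{2n(n-1)\lambda}-\frac{e^{-\lambda}}{(n-1)\lambda}$; 2. $\displaystyle R_\infty(F)=\frac{1-e^{-\lambda}}{n\lambda}$.
   Context: $P_\lambda(k)=\frac{1}{1-e^{-\lambda}}\frac{e^{-\lambda}\lambda^k}{k!}$, $k\ge1$, is the zero-truncated Poisson pmf. $X^*$ is a random variable with $\mathbb{P}(X^*=k)=e^{-\lambda}\lambda^{k-1}/(k-1)!$, $k\ge1$. For $x>0$ and real $s>0$, $H(x,s):=\frac{e^{-\lambda}}{1-e^{-\lambda}}\left\{\frac{\exp[\lambda e^{-x}]\,\Gamma(s,\lambda e^{-x})}{\Gamma(s)}-1\right\}$ (equal to $\sum_{k=1}^{s-1}e^{-xk}P_\lambda(k)$ for integer $s\ge1$), with $\Gamma(s,y)$ the upper incomplete gamma function. $\mathscr{L}_F(x)=\sum_{k\ge1}e^{-xk}P_\lambda(k)$. For $\varepsilon>0$, $R_\varepsilon(F)=\int_0^\infty\mathbb{E}\big[e^{-xX^*}H(x,\varepsilon X^* )\big]\,\mathscr{L}_F(x)^{n-2}\,dx$, and $R_1(F)=\int_0^\infty\lim_{\varepsilon\to1}\mathbb{E}[e^{-xX^*}H(x,\varepsilon X^* )]\mathscr{L}_F(x)^{n-2}dx$,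 $R_\infty(F)=\int_0^\infty\lim_{\varepsilon\to\infty}\mathbb{E}[e^{-xX^*}H(x,\varepsilon X^* )]\mathscr{L}_F(x)^{n-2}dx$. $I_0$ is the modified Bessel function of the first kind of order zero. *)

theory Defs
  imports "HOL-Analysis.Analysis"
begin

definition ztp_pmf :: "real \<Rightarrow> nat \<Rightarrow> real" where
  "ztp_pmf l k = (1 / (1 - exp (- l))) * (exp (- l) * l ^ k / fact k)"

definition xstar_pmf :: "real \<Rightarrow> nat \<Rightarrow> real" where
  "xstar_pmf l k = exp (- l) * l ^ (k - 1) / fact (k - 1)"

definition upper_Gamma :: "real \<Rightarrow> real \<Rightarrow> real" where
  "upper_Gamma s y = (LBINT t:{y<..}. t powr (s - 1) * exp (- t))"

definition H :: "real \<Rightarrow> real \<Rightarrow> real \<Rightarrow> real" where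
  "H l x s = exp (- l) / (1 - exp (- l)) *
     (exp (l * exp (- x)) * upper_Gamma s (l * exp (- x)) / Gamma s - 1)"

definition LF :: "real \<Rightarrow> real \<Rightarrow> real" where
  "LF l x = (\<Sum>k. exp (- x * real (Suc k)) * ztp_pmf l (Suc k))"

definition EH :: "real \<Rightarrow> real \<Rightarrow> real \<Rightarrow> real" where
  "EH l x eps = (\<Sum>k. xstar_pmf l (Suc k) * (exp (- x * real (Suc k)) * H l x (eps * real (Suc k))))"

definition R1 :: "real \<Rightarrow> nat \<Rightarrow> real" where
  "R1 l n = (LBINT x:{0<..}. Lim (at (1::real)) (\<lambda>eps. EH l x eps) * LF l x ^ (n - 2))"

definition Rinf :: "real \<Rightarrow> nat \<Rightarrow> real" where
  "Rinf l n = (LBINT x:{0<..}. Lim at_top (\<lambda>eps. EH l x eps) * LF l x ^ (n - 2))"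

definition I0 :: "real \<Rightarrow> real" where
  "I0 y = (\<Sum>m. (y / 2) ^ (2 * m) / (fact m) ^ 2)"

end

theory Submission
  imports Defs
begin

text \<open>
  For an integer s = k, the quotient e^y Gamma(k, y) / Gamma(k) is the exponential partial sum
  sum_{j<k} y^j / j!. Hence, with z = lambda e^-x and c = 1 / (e^lambda - 1), H(x, k) is c times a
  partial sum of e^z - 1 = sum_{j>=1} z^j / j!, and c (e^z - 1) is exactly L_F(x). For real s,
  H(x, s) is continuous in s, bounded uniformly in s, and tends to c (e^z - 1) because
  Gamma(s, y) / Gamma(s) -> 1; so by Tannery's theorem the limits in epsilon can be taken termwise
  in the series defining E[e^(-x X*) H(x, epsilon X*)]. At epsilon = 1 this gives a sum over the
  triangle j <= k of products of the terms z^(k+1) / (k+1)!, i.e. half of (e^z - 1)^2 plus half of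
  the diagonal I0(2z) - 1; at epsilon = infinity it gives e^z c (e^z - 1) up to a common factor.
  The substitution y = e^-x then turns R1 and Rinf into integrals over [0, 1] of
  I0(2 lambda y) (e^(lambda y) - 1)^(n-2) and of the elementary e^(lambda y) (e^(lambda y) - 1)^k.
\<close>

section \<open>Exponential series and the upper incomplete gamma function\<close>

lemma exp_real_sums: "(\<lambda>n. x ^ n / fact n) sums exp (x :: real)"
  using exp_converges[of x] by (simp add: divide_inverse scaleR_conv_of_real mult.commute)

lemma exp_minus_one_sums: "(\<lambda>k. x ^ Suc k / fact (Suc k)) sums (exp x - 1 :: real)"
  using exp_real_sums[of x] by (subst sums_Suc_iff) simp

lemma DERIV_exp_minus_mult_exp_partial_sum:
  fixes t :: real
  shows "DERIV (\<lambda>t. exp (- t) * (\<Sum>j\<le>m. t ^ j / fact j)) t :> - (exp (- t) * t ^ m / fact m)"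
proof (induction m)
  case 0
  show ?case by (auto intro!: derivative_eq_intros)
next
  case (Suc m)
  have power: "DERIV (\<lambda>t. t ^ Suc m / fact (Suc m)) t :> t ^ m / fact m"
    using DERIV_cdivide[OF DERIV_pow[of "Suc m" t], of "fact (Suc m)"] by (simp add: fact_Suc)
  have exp: "DERIV (\<lambda>t. exp (- t)) t :> - exp (- t)"
    by (auto intro!: derivative_eq_intros)
  have "DERIV (\<lambda>t. exp (- t) * (t ^ Suc m / fact (Suc m))) t :>
               - exp (- t) * (t ^ Suc m / fact (Suc m)) + exp (- t) * (t ^ m / fact m)"
    using DERIV_mult[OF exp power] by (simp add: mult.commute)
  from DERIV_add[OF Suc this] show ?case
    by (simp add: distrib_left)
qed

lemma upper_Gamma_of_nat_Suc:
  assumes "y \<ge> 0"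
  shows "upper_Gamma (real (Suc m)) y = fact m * exp (- y) * (\<Sum>j\<le>m. y ^ j / fact j)"
proof -
  let ?F = "\<lambda>t. - fact m * (exp (- t) * (\<Sum>j\<le>m. t ^ j / fact j))"
  have "upper_Gamma (real (Suc m)) y = (LBINT t=ereal y..\<infinity>. t ^ m * exp (- t))"
    unfolding upper_Gamma_def interval_lebesgue_integral_def
    by (simp, rule set_lebesgue_integral_cong) (use assms in \<open>auto simp: powr_realpow\<close>)
  also have "\<dots> = 0 - ?F y"
  proof (rule interval_integral_FTC_nonneg)
    show "DERIV ?F t :> t ^ m * exp (- t)" for t :: real
      using DERIV_cmult[OF DERIV_exp_minus_mult_exp_partial_sum, of "- fact m" m t]
      by (simp add: mult.commute)
    show "((?F \<circ> real_of_ereal) \<longlongrightarrow> ?F y) (at_right (ereal y))"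
      unfolding ereal_tendsto_simps by (intro tendsto_intros) auto
    have "((\<lambda>t. - fact m * (\<Sum>j\<le>m. (t ^ j / exp t) / fact j)) \<longlongrightarrow> - fact m * (\<Sum>j\<le>m. 0 / (fact j :: real))) at_top"
      by (intro tendsto_intros tendsto_power_div_exp_0) simp_all
    then show "((?F \<circ> real_of_ereal) \<longlongrightarrow> 0) (at_left \<infinity>)"
      unfolding ereal_tendsto_simps by (simp add: exp_minus sum_distrib_left field_simps)
  qed (use assms in auto)
  finally show ?thesis by simp
qed

lemma absolutely_integrable_imp_set_integrable_lborel:
  fixes f :: "real \<Rightarrow> real"
  assumes "f absolutely_integrable_on S" "S \<in> sets borel" "f \<in> borel_measurable borel"
  shows "set_integrable lborel S f"
proof -
  have "(\<lambda>x. indicator S x *\<^sub>R f x) \<in> borel_measurable lborel"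
    using assms by measurable
  with assms(1) show ?thesis
    unfolding set_integrable_def by (simp add: integrable_completion)
qed

definition Gamma_integrand :: "real \<Rightarrow> real \<Rightarrow> real" where
  "Gamma_integrand s t = t powr (s - 1) * exp (- t)"

lemma borel_measurable_Gamma_integrand [measurable]: "Gamma_integrand s \<in> borel_measurable borel"
  unfolding Gamma_integrand_def by measurable

lemma Gamma_integrand_nonneg: "0 \<le> Gamma_integrand s t"
  unfolding Gamma_integrand_def by simp

lemma upper_Gamma_eq_set_integral: "upper_Gamma s y = (LBINT t:{y<..}. Gamma_integrand s t)"
  unfolding upper_Gamma_def Gamma_integrand_def ..

lemma
  assumes "s > 0"
  shows set_integrable_Gamma_integrand: "set_integrable lborel {0..} (Gamma_integrand s)"
    and Gamma_eq_set_integral: "Gamma s = (LBINT t:{0..}. Gamma_integrand s t)"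
proof -
  have has_int: "(Gamma_integrand s has_integral Gamma s) {0..}"
    using Gamma_integral_real[OF assms] by (simp add: Gamma_integrand_def[abs_def] exp_minus divide_inverse)
  then have "Gamma_integrand s absolutely_integrable_on {0..}"
    by (intro nonnegative_absolutely_integrable_1) (auto simp: Gamma_integrand_nonneg)
  then show si: "set_integrable lborel {0..} (Gamma_integrand s)"
    by (intro absolutely_integrable_imp_set_integrable_lborel) auto
  show "Gamma s = (LBINT t:{0..}. Gamma_integrand s t)"
    using set_borel_integral_eq_integral(2)[OF si] has_int by (simp add: integral_unique)
qed

lemma
  assumes "s > 0" "y \<ge> 0"
  shows set_integrable_Gamma_integrand_tail: "set_integrable lborel {y<..} (Gamma_integrand s)"
    and upper_Gamma_nonneg: "0 \<le> upper_Gamma s y"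
    and upper_Gamma_le_Gamma: "upper_Gamma s y \<le> Gamma s"
proof -
  have s0: "set_integrable lborel {0..} (Gamma_integrand s)"
    using set_integrable_Gamma_integrand[OF assms(1)] .
  show si: "set_integrable lborel {y<..} (Gamma_integrand s)"
    by (rule set_integrable_subset[OF s0]) (use assms in auto)
  show "0 \<le> upper_Gamma s y"
    unfolding upper_Gamma_eq_set_integral set_lebesgue_integral_def
    by (auto intro!: integral_nonneg simp: Gamma_integrand_nonneg)
  have "upper_Gamma s y = integral {y<..} (Gamma_integrand s)"
    unfolding upper_Gamma_eq_set_integral by (rule set_borel_integral_eq_integral(2)[OF si])
  also have "\<dots> \<le> integral {0..} (Gamma_integrand s)"
    by (intro integral_subset_le set_borel_integral_eq_integral(1)[OF si]
        set_borel_integral_eq_integral(1)[OF s0]) (use assms in \<open>auto simp: Gamma_integrand_nonneg\<close>)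
  also have "\<dots> = Gamma s"
    using set_borel_integral_eq_integral(2)[OF s0] Gamma_eq_set_integral[OF assms(1)] by simp
  finally show "upper_Gamma s y \<le> Gamma s" .
qed

lemma upper_Gamma_lower_bound:
  assumes "s \<ge> 1" "y > 0"
  shows "(y + 1) powr (s - 1) * exp (- (y + 2)) \<le> upper_Gamma s y"
proof -
  have si: "set_integrable lborel {y<..} (Gamma_integrand s)"
    using set_integrable_Gamma_integrand_tail[of s y] assms by simp
  have ci: "Gamma_integrand s integrable_on {y+1..y+2}"
    unfolding Gamma_integrand_def
    by (intro integrable_continuous_interval continuous_intros) (use assms in auto)
  have "(y + 1) powr (s - 1) * exp (- (y + 2)) = integral {y+1..y+2} (\<lambda>_. (y + 1) powr (s - 1) * exp (- (y + 2)))"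
    by simp
  also have "\<dots> \<le> integral {y+1..y+2} (Gamma_integrand s)"
    using ci assms unfolding Gamma_integrand_def
    by (intro integral_le mult_mono powr_mono2) auto
  also have "\<dots> \<le> integral {y<..} (Gamma_integrand s)"
    by (intro integral_subset_le ci set_borel_integral_eq_integral(1)[OF si])
       (use assms in \<open>auto simp: Gamma_integrand_nonneg\<close>)
  also have "\<dots> = upper_Gamma s y"
    unfolding upper_Gamma_eq_set_integral by (rule set_borel_integral_eq_integral(2)[OF si, symmetric])
  finally show ?thesis .
qed

lemma Gamma_minus_upper_Gamma_le:
  assumes "s \<ge> 1" "y > 0"
  shows "Gamma s - upper_Gamma s y \<le> y powr s"
proof -
  have s0: "set_integrable lborel {0..} (Gamma_integrand s)"
    using set_integrable_Gamma_integrand[of s] assms by simp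
  have sy: "set_integrable lborel {0..y} (Gamma_integrand s)"
    by (rule set_integrable_subset[OF s0]) auto
  have si: "set_integrable lborel {y<..} (Gamma_integrand s)"
    using set_integrable_Gamma_integrand_tail[of s y] assms by simp
  have "{0..} = {0..y} \<union> {y<..}" using assms by auto
  then have "Gamma s = (LBINT t:{0..y}. Gamma_integrand s t) + upper_Gamma s y"
    using Gamma_eq_set_integral[of s] set_integral_Un[OF _ sy si] assms
    by (simp add: upper_Gamma_eq_set_integral disjoint_iff)
  moreover have "(LBINT t:{0..y}. Gamma_integrand s t) \<le> integral {0..y} (\<lambda>_. y powr (s - 1))"
    unfolding set_borel_integral_eq_integral(2)[OF sy]
  proof (rule integral_le)
    show "Gamma_integrand s integrable_on {0..y}" by (rule set_borel_integral_eq_integral(1)[OF sy])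
    fix t assume "t \<in> {0..y}"
    then have "t powr (s - 1) \<le> y powr (s - 1)" "exp (- t) \<le> 1"
      using assms by (auto intro: powr_mono2)
    then show "Gamma_integrand s t \<le> y powr (s - 1)"
      unfolding Gamma_integrand_def by (metis exp_ge_zero mult_left_le powr_ge_zero order_trans)
  qed auto
  moreover have "integral {0..y} (\<lambda>_. y powr (s - 1)) = y powr s"
    using assms by (simp add: powr_mult_base)
  ultimately show ?thesis by simp
qed

lemma one_minus_upper_Gamma_div_Gamma_bounds:
  assumes "s \<ge> 1" "y > 0"
  shows "0 \<le> 1 - upper_Gamma s y / Gamma s"
    and "1 - upper_Gamma s y / Gamma s \<le> (y + 1) * exp (y + 2) * (y / (y + 1)) powr s"
proof -
  have G: "Gamma s > 0" using assms by simp
  have ub: "upper_Gamma s y \<le> Gamma s" using upper_Gamma_le_Gamma[of s y] assms by simp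
  then show "0 \<le> 1 - upper_Gamma s y / Gamma s" using G by simp
  have L: "(y + 1) powr (s - 1) * exp (- (y + 2)) > 0" using assms by simp
  have "1 - upper_Gamma s y / Gamma s = (Gamma s - upper_Gamma s y) / Gamma s"
    using G by (simp add: field_simps)
  also have "\<dots> \<le> y powr s / Gamma s"
    using Gamma_minus_upper_Gamma_le[OF assms] G by (intro divide_right_mono) auto
  also have "\<dots> \<le> y powr s / ((y + 1) powr (s - 1) * exp (- (y + 2)))"
    using upper_Gamma_lower_bound[OF assms] ub L by (intro divide_left_mono) auto
  also have "\<dots> = (y + 1) * exp (y + 2) * (y / (y + 1)) powr s"
    using assms by (simp add: powr_diff powr_divide field_simps flip: exp_add)
  finally show "1 - upper_Gamma s y / Gamma s \<le> (y + 1) * exp (y + 2) * (y / (y + 1)) powr s" .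
qed

lemma powr_tendsto_0_at_top:
  fixes q :: real
  assumes "0 < q" "q < 1"
  shows "((\<lambda>s. q powr s) \<longlongrightarrow> 0) at_top"
proof -
  have "filterlim (\<lambda>s. ln q * s) at_bot at_top"
    using assms by (intro filterlim_tendsto_neg_mult_at_bot[OF tendsto_const _ filterlim_ident]) simp
  then show ?thesis
    using assms by (simp add: powr_def mult.commute filterlim_compose[OF exp_at_bot])
qed

lemma upper_Gamma_div_Gamma_tendsto_1:
  assumes "y > 0"
  shows "((\<lambda>s. upper_Gamma s y / Gamma s) \<longlongrightarrow> 1) at_top"
proof -
  let ?K = "(y + 1) * exp (y + 2)" and ?q = "y / (y + 1)"
  have "((\<lambda>s. 1 - upper_Gamma s y / Gamma s) \<longlongrightarrow> 0) at_top"
  proof (rule tendsto_sandwich[where f = "\<lambda>_. 0" and h = "\<lambda>s. ?K * ?q powr s"])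
    show "eventually (\<lambda>s. 0 \<le> 1 - upper_Gamma s y / Gamma s) at_top"
      "eventually (\<lambda>s. 1 - upper_Gamma s y / Gamma s \<le> ?K * ?q powr s) at_top"
      using one_minus_upper_Gamma_div_Gamma_bounds[OF _ assms]
      by (auto intro: eventually_mono[OF eventually_ge_at_top[of 1]])
    show "((\<lambda>s. ?K * ?q powr s) \<longlongrightarrow> 0) at_top"
      using tendsto_mult[OF tendsto_const powr_tendsto_0_at_top] assms by simp
  qed simp
  from tendsto_diff[OF tendsto_const this, of 1] show ?thesis by simp
qed

lemma Gamma_integrand_le_add:
  assumes "0 < a" "a \<le> s" "s \<le> b" "t > 0"
  shows "Gamma_integrand s t \<le> Gamma_integrand a t + Gamma_integrand b t"
proof -
  have "t powr (s - 1) \<le> t powr (a - 1) \<or> t powr (s - 1) \<le> t powr (b - 1)"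
    using assms by (cases "t \<le> 1") (auto intro: powr_mono' powr_mono)
  then have "Gamma_integrand s t \<le> Gamma_integrand a t \<or> Gamma_integrand s t \<le> Gamma_integrand b t"
    unfolding Gamma_integrand_def by (auto intro: mult_right_mono)
  then show ?thesis using Gamma_integrand_nonneg[of a t] Gamma_integrand_nonneg[of b t] by linarith
qed

lemma isCont_upper_Gamma:
  assumes "s0 > 0" "y > 0"
  shows "isCont (\<lambda>s. upper_Gamma s y) s0"
proof (rule continuous_at_sequentiallyI)
  fix X :: "nat \<Rightarrow> real" assume X: "X \<longlonglongrightarrow> s0"
  \<comment> \<open>Clipping to \<open>[s0/2, 2 s0]\<close> gives a single integrable majorant and changes only finitely many terms.\<close>
  define X' where "X' n = max (s0/2) (min (2 * s0) (X n))" for n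
  have "X' \<longlonglongrightarrow> max (s0/2) (min (2 * s0) s0)"
    unfolding X'_def by (intro tendsto_intros X)
  then have X': "X' \<longlonglongrightarrow> s0" using assms by simp
  have "eventually (\<lambda>n. X n > s0/2 \<and> X n < 2 * s0) sequentially"
    using X assms by (intro eventually_conj order_tendstoD) auto
  then have ev: "eventually (\<lambda>n. X' n = X n) sequentially"
    by eventually_elim (auto simp: X'_def)
  let ?f = "\<lambda>s t. indicator {y<..} t *\<^sub>R Gamma_integrand s t"
  let ?w = "\<lambda>t. indicator {y<..} t *\<^sub>R (Gamma_integrand (s0/2) t + Gamma_integrand (2 * s0) t)"
  have "(\<lambda>n. integral\<^sup>L lborel (?f (X' n))) \<longlonglongrightarrow> integral\<^sup>L lborel (?f s0)"
  proof (rule integral_dominated_convergence[where w = ?w])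
    have "set_integrable lborel {y<..} (\<lambda>t. Gamma_integrand (s0/2) t + Gamma_integrand (2 * s0) t)"
      using assms by (intro set_integral_add set_integrable_Gamma_integrand_tail) auto
    then show "integrable lborel ?w" unfolding set_integrable_def .
    show "AE t in lborel. (\<lambda>n. ?f (X' n) t) \<longlonglongrightarrow> ?f s0 t"
      using assms unfolding Gamma_integrand_def
      by (intro AE_I2) (auto intro!: tendsto_intros X' split: split_indicator)
    show "AE t in lborel. norm (?f (X' n) t) \<le> ?w t" for n
      using assms Gamma_integrand_le_add[of "s0/2" "X' n" "2 * s0"]
      by (intro AE_I2) (auto simp: X'_def Gamma_integrand_nonneg split: split_indicator)
  qed auto
  then have "(\<lambda>n. upper_Gamma (X' n) y) \<longlonglongrightarrow> upper_Gamma s0 y"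
    unfolding upper_Gamma_eq_set_integral set_lebesgue_integral_def .
  then show "(\<lambda>n. upper_Gamma (X n) y) \<longlonglongrightarrow> upper_Gamma s0 y"
    by (rule Lim_transform_eventually) (use ev in \<open>eventually_elim, simp\<close>)
qed

section \<open>The function \<open>H\<close>\<close>

lemma exp_minus_div_one_minus_exp_minus: "exp (- l) / (1 - exp (- l)) = inverse (exp l - 1 :: real)"
  by (cases "l = 0") (simp_all add: exp_minus field_simps)

lemma H_eq: "H l x s = inverse (exp l - 1) * (exp (l * exp (- x)) * (upper_Gamma s (l * exp (- x)) / Gamma s) - 1)"
  unfolding H_def exp_minus_div_one_minus_exp_minus by simp

lemma H_of_nat_Suc:
  assumes "l \<ge> 0"
  shows "H l x (real (Suc m)) = inverse (exp l - 1) * (\<Sum>j<m. (l * exp (- x)) ^ Suc j / fact (Suc j))"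
proof -
  let ?y = "l * exp (- x)"
  have y: "?y \<ge> 0" using assms by simp
  have G: "Gamma (real (Suc m)) = fact m" using Gamma_fact[of m] by (simp add: add.commute)
  have "exp ?y * (upper_Gamma (real (Suc m)) ?y / Gamma (real (Suc m))) = (\<Sum>j\<le>m. ?y ^ j / fact j)"
    unfolding upper_Gamma_of_nat_Suc[OF y] G by (simp add: exp_minus field_simps)
  also have "\<dots> = 1 + (\<Sum>j<m. ?y ^ Suc j / fact (Suc j))"
    unfolding lessThan_Suc_atMost[symmetric] sum.lessThan_Suc_shift by simp
  finally show ?thesis unfolding H_eq by simp
qed

lemma abs_H_le:
  assumes "l > 0" "s > 0"
  shows "\<bar>H l x s\<bar> \<le> inverse (exp l - 1) * (exp (l * exp (- x)) + 1)"
proof -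
  let ?y = "l * exp (- x)"
  have "0 \<le> upper_Gamma s ?y / Gamma s" "upper_Gamma s ?y / Gamma s \<le> 1"
    using upper_Gamma_nonneg[of s ?y] upper_Gamma_le_Gamma[of s ?y] assms by simp_all
  then have "0 \<le> exp ?y * (upper_Gamma s ?y / Gamma s)" "exp ?y * (upper_Gamma s ?y / Gamma s) \<le> exp ?y"
    by (intro mult_nonneg_nonneg mult_left_le; simp)+
  then have "\<bar>exp ?y * (upper_Gamma s ?y / Gamma s) - 1\<bar> \<le> exp ?y + 1"
    by linarith
  then show ?thesis
    using assms unfolding H_eq by (simp add: abs_mult mult_left_mono)
qed

lemma isCont_H:
  assumes "l > 0" "s0 > 0"
  shows "isCont (H l x) s0"
proof -
  have "s0 \<notin> \<int>\<^sub>\<le>\<^sub>0" using assms(2) by (auto elim!: nonpos_Ints_cases)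
  moreover have "Gamma s0 \<noteq> 0" using Gamma_real_pos[OF assms(2)] by simp
  ultimately show ?thesis
    unfolding H_eq[abs_def] using assms
    by (intro continuous_intros isCont_upper_Gamma isCont_Gamma) simp_all
qed

lemma H_tendsto_at_top:
  assumes "l > 0"
  shows "(H l x \<longlongrightarrow> inverse (exp l - 1) * (exp (l * exp (- x)) - 1)) at_top"
proof -
  have "((\<lambda>s. inverse (exp l - 1) * (exp (l * exp (- x)) * (upper_Gamma s (l * exp (- x)) / Gamma s) - 1))
         \<longlongrightarrow> inverse (exp l - 1) * (exp (l * exp (- x)) * 1 - 1)) at_top"
    using assms by (intro tendsto_intros upper_Gamma_div_Gamma_tendsto_1) simp
  then show ?thesis unfolding H_eq[abs_def] by simp
qed

section \<open>The Bessel function \<open>I0\<close>\<close>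

lemma summable_I0_coeffs: "summable (\<lambda>k. inverse ((fact k)\<^sup>2) * v ^ k :: real)"
proof (rule summable_comparison_test[OF _ sums_summable[OF exp_real_sums[of "\<bar>v\<bar>"]]])
  have "inverse ((fact k)\<^sup>2) * \<bar>v\<bar> ^ k \<le> \<bar>v\<bar> ^ k / fact k" for k
  proof -
    have "(1 :: real) \<le> fact k" by simp
    from mult_left_mono[OF this, of "fact k"] have "fact k \<le> (fact k :: real)\<^sup>2"
      by (simp add: power2_eq_square)
    then have "inverse ((fact k)\<^sup>2) \<le> inverse (fact k :: real)"
      by (intro le_imp_inverse_le) auto
    from mult_right_mono[OF this, of "\<bar>v\<bar> ^ k"] show ?thesis
      by (simp add: divide_inverse mult.commute)
  qed
  then show "\<exists>N. \<forall>k\<ge>N. norm (inverse ((fact k)\<^sup>2) * v ^ k) \<le> \<bar>v\<bar> ^ k / fact k"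
    by (simp add: abs_mult power_abs)
qed

lemma I0_term_eq: "(w / 2) ^ (2 * k) / (fact k)\<^sup>2 = inverse ((fact k)\<^sup>2) * ((w :: real)\<^sup>2 / 4) ^ k"
proof -
  have "(w / 2) ^ (2 * k) = (w\<^sup>2 / 4) ^ k" by (simp add: power_mult power_divide)
  then show ?thesis by (simp add: field_simps)
qed

lemma I0_sums: "(\<lambda>k. (w / 2) ^ (2 * k) / (fact k)\<^sup>2) sums I0 w"
  unfolding I0_def I0_term_eq by (rule summable_sums[OF summable_I0_coeffs])

lemma isCont_I0: "isCont I0 w"
proof -
  have "isCont (\<lambda>v. \<Sum>k. inverse ((fact k)\<^sup>2) * v ^ k) (w\<^sup>2 / 4)"
    by (rule isCont_powser_converges_everywhere[OF summable_I0_coeffs])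
  then have "isCont (\<lambda>w. \<Sum>k. inverse ((fact k)\<^sup>2) * (w\<^sup>2 / 4) ^ k) w"
    by (rule isCont_o2[rotated]) simp
  then show ?thesis unfolding I0_def I0_term_eq .
qed

lemma continuous_on_I0 [continuous_intros]: "continuous_on S f \<Longrightarrow> continuous_on S (\<lambda>x. I0 (f x))"
  by (rule continuous_on_compose2[OF continuous_at_imp_continuous_on[OF ballI[OF isCont_I0]]]) auto

lemma I0_minus_one_sums: "(\<lambda>k. (z ^ Suc k / fact (Suc k))\<^sup>2) sums (I0 (2 * z) - 1)"
proof -
  have "(2 * z / 2) ^ (2 * k) / (fact k)\<^sup>2 = (z ^ k / fact k)\<^sup>2" for k
    by (simp add: power_divide mult.commute[of 2 k] flip: power_mult)
  with I0_sums[of "2 * z"] have "(\<lambda>k. (z ^ k / fact k)\<^sup>2) sums I0 (2 * z)"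
    by (simp only:)
  then show ?thesis by (subst sums_Suc_iff) simp
qed

lemma one_le_I0: "1 \<le> I0 w"
proof -
  have "0 \<le> I0 (2 * (w / 2)) - 1"
    by (rule sums_le[OF _ sums_zero I0_minus_one_sums]) simp
  then show ?thesis by simp
qed

section \<open>The limits of \<open>EH\<close> in \<open>\<epsilon>\<close>\<close>

lemma xstar_pmf_Suc: "xstar_pmf l (Suc k) = exp (- l) * (l ^ k / fact k)"
  unfolding xstar_pmf_def by simp

lemma xstar_pmf_sums: "(\<lambda>k. xstar_pmf l (Suc k)) sums 1"
  using sums_mult[OF exp_real_sums[of l], of "exp (- l)"] by (simp add: xstar_pmf_Suc exp_minus)

lemma xstar_pmf_Suc_mult_exp:
  "xstar_pmf l (Suc k) * (exp (- x * real (Suc k)) * c) = exp (- l) * exp (- x) * ((l * exp (- x)) ^ k / fact k) * c"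
proof -
  have "exp (- x * real (Suc k)) = exp (- x) ^ Suc k"
    by (subst exp_of_nat_mult[symmetric]) (simp add: mult.commute)
  then show ?thesis unfolding xstar_pmf_Suc by (simp add: power_mult_distrib)
qed

lemma EH_tendsto:
  fixes F :: "real filter"
  assumes "l > 0" "x > 0" "F \<noteq> bot" "eventually (\<lambda>e. e > 0) F"
    and lim: "\<And>k. ((\<lambda>e. H l x (e * real (Suc k))) \<longlongrightarrow> h k) F"
  shows "(EH l x \<longlongrightarrow> (\<Sum>k. xstar_pmf l (Suc k) * (exp (- x * real (Suc k)) * h k))) F"
proof -
  let ?C = "inverse (exp l - 1) * (exp (l * exp (- x)) + 1)"
  let ?t = "\<lambda>k e. xstar_pmf l (Suc k) * (exp (- x * real (Suc k)) * H l x (e * real (Suc k)))"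
  have bound: "norm (?t k e) \<le> xstar_pmf l (Suc k) * ?C" if "e > 0" for k e
  proof -
    have "\<bar>H l x (e * real (Suc k))\<bar> \<le> ?C"
      using that assms by (intro abs_H_le) simp_all
    moreover have "exp (- x * real (Suc k)) \<le> 1" using assms by simp
    ultimately have "exp (- x * real (Suc k)) * \<bar>H l x (e * real (Suc k))\<bar> \<le> 1 * ?C"
      by (intro mult_mono) auto
    moreover have "xstar_pmf l (Suc k) \<ge> 0" using assms by (simp add: xstar_pmf_Suc)
    ultimately show ?thesis by (simp add: abs_mult mult_left_mono)
  qed
  have ev: "eventually (\<lambda>(k, e). norm (?t k e) \<le> xstar_pmf l (Suc k) * ?C) (at_top \<times>\<^sub>F F)"
    unfolding eventually_prod_filter
    by (intro exI[of _ "\<lambda>_. True"] exI[of _ "\<lambda>e. e > 0"]) (use assms(4) bound in auto)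
  have lim': "((\<lambda>e. ?t k e) \<longlongrightarrow> xstar_pmf l (Suc k) * (exp (- x * real (Suc k)) * h k)) F" for k
    by (intro tendsto_intros lim)
  show ?thesis
    unfolding EH_def[abs_def]
    using tannerys_theorem[OF lim' ev summable_mult2[OF sums_summable[OF xstar_pmf_sums]] assms(3)] by blast
qed

lemma sums_mult_partial_sum_self:
  fixes a :: "nat \<Rightarrow> real"
  assumes "summable a" "summable (\<lambda>k. (a k)\<^sup>2)"
  shows "(\<lambda>k. a k * (\<Sum>j\<le>k. a j)) sums (((\<Sum>k. a k)\<^sup>2 + (\<Sum>k. (a k)\<^sup>2)) / 2)"
proof -
  \<comment> \<open>The products over the triangle \<open>j \<le> k\<close> fill half of the square plus half of the diagonal.\<close>
  have partial: "(\<Sum>k<N. a k * (\<Sum>j\<le>k. a j)) = ((\<Sum>k<N. a k)\<^sup>2 + (\<Sum>k<N. (a k)\<^sup>2)) / 2" for N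
    by (induction N) (simp_all add: power2_eq_square algebra_simps lessThan_Suc_atMost[symmetric])
  have "(\<lambda>N. ((\<Sum>k<N. a k)\<^sup>2 + (\<Sum>k<N. (a k)\<^sup>2)) / 2) \<longlonglongrightarrow> ((\<Sum>k. a k)\<^sup>2 + (\<Sum>k. (a k)\<^sup>2)) / 2"
    by (intro tendsto_intros summable_LIMSEQ assms) simp
  then show ?thesis unfolding sums_def partial .
qed

lemma xstar_H_of_nat_sums:
  assumes "l > 0"
  shows "(\<lambda>k. xstar_pmf l (Suc k) * (exp (- x * real (Suc k)) * H l x (real (Suc k))))
           sums (exp (- l) * exp (- x) * inverse (exp l - 1)
                   * ((exp (l * exp (- x)) - 1)\<^sup>2 + I0 (2 * (l * exp (- x))) - 1) / 2)"
    (is "?t sums _")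
proof -
  let ?c = "exp (- l) * exp (- x) * inverse (exp l - 1)"
  define z where "z = l * exp (- x)"
  define a where "a k = z ^ Suc k / fact (Suc k)" for k
  have a: "a sums (exp z - 1)" "(\<lambda>k. (a k)\<^sup>2) sums (I0 (2 * z) - 1)"
    unfolding a_def by (rule exp_minus_one_sums I0_minus_one_sums)+
  have "?t (Suc k) = ?c * (a k * (\<Sum>j\<le>k. a j))" for k
    unfolding xstar_pmf_Suc_mult_exp H_of_nat_Suc[OF less_imp_le[OF assms]] lessThan_Suc_atMost
    by (simp only: a_def z_def mult_ac)
  moreover have "(\<lambda>k. ?c * (a k * (\<Sum>j\<le>k. a j))) sums (?c * (((exp z - 1)\<^sup>2 + (I0 (2 * z) - 1)) / 2))"
    using sums_mult[OF sums_mult_partial_sum_self[OF a[THEN sums_summable]]]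
    unfolding sums_unique[OF a(1), symmetric] sums_unique[OF a(2), symmetric] .
  ultimately have "(\<lambda>k. ?t (Suc k)) sums (?c * ((exp z - 1)\<^sup>2 + I0 (2 * z) - 1) / 2)"
    by (simp only:) (simp add: algebra_simps)
  then have "?t sums (?c * ((exp z - 1)\<^sup>2 + I0 (2 * z) - 1) / 2 + ?t 0)"
    using sums_Suc_iff by blast
  moreover have "?t 0 = 0" using H_of_nat_Suc[of l x 0] assms by simp
  ultimately show ?thesis by (simp only: z_def add_0_right)
qed

lemma Lim_EH_at_1:
  assumes "l > 0" "x > 0"
  shows "Lim (at 1) (EH l x) = exp (- l) * exp (- x) * inverse (exp l - 1)
           * ((exp (l * exp (- x)) - 1)\<^sup>2 + I0 (2 * (l * exp (- x))) - 1) / 2"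
proof -
  have lim: "((\<lambda>e. H l x (e * real (Suc k))) \<longlongrightarrow> H l x (real (Suc k))) (at 1)" for k
  proof -
    have "isCont (H l x) (real (Suc k))" using assms by (intro isCont_H) auto
    moreover have "((\<lambda>e. e * real (Suc k)) \<longlongrightarrow> real (Suc k)) (at (1::real))"
      by (intro tendsto_eq_intros) auto
    ultimately show ?thesis by (rule isCont_tendsto_compose)
  qed
  have "eventually (\<lambda>e::real. e > 0) (at 1)"
    by (rule order_tendstoD(1)[OF tendsto_ident_at]) simp
  from EH_tendsto[OF assms _ this lim]
  have "Lim (at 1) (EH l x) = (\<Sum>k. xstar_pmf l (Suc k) * (exp (- x * real (Suc k)) * H l x (real (Suc k))))"
    by (intro tendsto_Lim) simp_all
  then show ?thesis using sums_unique[OF xstar_H_of_nat_sums[OF assms(1)]] by simp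
qed

lemma Lim_EH_at_top:
  assumes "l > 0" "x > 0"
  shows "Lim at_top (EH l x) = exp (- l) * exp (- x) * exp (l * exp (- x))
           * (inverse (exp l - 1) * (exp (l * exp (- x)) - 1))"
proof -
  define c where "c = inverse (exp l - 1) * (exp (l * exp (- x)) - 1)"
  have lim: "((\<lambda>e. H l x (e * real (Suc k))) \<longlongrightarrow> c) at_top" for k
  proof -
    have "filterlim (\<lambda>e::real. real (Suc k) * e) at_top at_top"
      by (rule filterlim_tendsto_pos_mult_at_top[OF tendsto_const _ filterlim_ident]) simp
    then have "filterlim (\<lambda>e::real. e * real (Suc k)) at_top at_top"
      by (simp only: mult.commute)
    with H_tendsto_at_top[OF assms(1)] show ?thesis
      unfolding c_def by (rule filterlim_compose)
  qed
  have sums: "(\<lambda>k. xstar_pmf l (Suc k) * (exp (- x * real (Suc k)) * c))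
      sums (exp (- l) * exp (- x) * exp (l * exp (- x)) * c)"
    unfolding xstar_pmf_Suc_mult_exp by (intro sums_mult sums_mult2 exp_real_sums)
  from EH_tendsto[OF assms _ eventually_gt_at_top lim]
  have "Lim at_top (EH l x) = (\<Sum>k. xstar_pmf l (Suc k) * (exp (- x * real (Suc k)) * c))"
    by (intro tendsto_Lim) simp_all
  also have "\<dots> = exp (- l) * exp (- x) * exp (l * exp (- x)) * c"
    by (rule sums_unique[OF sums, symmetric])
  finally show ?thesis unfolding c_def .
qed

lemma LF_eq: "LF l x = inverse (exp l - 1) * (exp (l * exp (- x)) - 1)"
proof -
  have "exp (- x * real (Suc k)) * ztp_pmf l (Suc k)
      = inverse (exp l - 1) * ((l * exp (- x)) ^ Suc k / fact (Suc k))" for k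
  proof -
    have "exp (- x * real (Suc k)) = exp (- x) ^ Suc k"
      by (subst exp_of_nat_mult[symmetric]) (simp add: mult.commute)
    then show ?thesis
      unfolding ztp_pmf_def exp_minus_div_one_minus_exp_minus[symmetric]
      by (simp add: power_mult_distrib)
  qed
  then have "(\<lambda>k. exp (- x * real (Suc k)) * ztp_pmf l (Suc k))
      sums (inverse (exp l - 1) * (exp (l * exp (- x)) - 1))"
    by (simp only:) (intro sums_mult exp_minus_one_sums)
  then show ?thesis unfolding LF_def by (rule sums_unique[symmetric])
qed

section \<open>The integrals \<open>R1\<close> and \<open>Rinf\<close>\<close>

lemma set_integral_exp_minus_substitution:
  fixes g :: "real \<Rightarrow> real"
  assumes cont: "continuous_on {0..1} g" and nonneg: "\<And>y. y \<in> {0..1} \<Longrightarrow> 0 \<le> g y"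
  shows "(LBINT x:{0<..}. g (exp (- x)) * exp (- x)) = (LBINT y:{0..1}. g y)"
proof -
  define G where "G t = (LBINT y=ereal 0..ereal t. g y)" for t :: real
  have G': "(G has_vector_derivative g t) (at t within {0..1})" if "t \<in> {0..1}" for t
    unfolding G_def using that interval_integral_FTC2[of 0 0 1 g t, OF _ _ cont] by auto
  have G_cont: "continuous (at t within {0..1}) G" if "t \<in> {0..1}" for t
    using G'[OF that] by (rule has_vector_derivative_continuous)
  have G_deriv: "DERIV G t :> g t" if "0 < t" "t < 1" for t
  proof -
    have "(G has_vector_derivative g t) (at t within {0<..<1})"
      by (rule has_vector_derivative_within_subset[OF G']) (use that in auto)
    then have "(G has_vector_derivative g t) (at t)"
      using has_vector_derivative_within_open[of t "{0<..<1}"] that by auto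
    then show ?thesis by (simp add: has_real_derivative_iff_has_vector_derivative)
  qed
  let ?F = "\<lambda>x. - G (exp (- x))"
  have "(LBINT x:{0<..}. g (exp (- x)) * exp (- x)) = (LBINT x=ereal 0..\<infinity>. g (exp (- x)) * exp (- x))"
    by (simp add: interval_lebesgue_integral_def)
  also have "\<dots> = - G 0 - (- G 1)"
  proof (rule interval_integral_FTC_nonneg)
    fix x :: real assume "ereal 0 < ereal x"
    then have x: "0 < exp (- x)" "exp (- x) < 1" by auto
    have "DERIV (\<lambda>x. exp (- x)) x :> - exp (- x)" by (auto intro!: derivative_eq_intros)
    from DERIV_minus[OF DERIV_chain2[OF G_deriv[OF x] this]]
    show "DERIV ?F x :> g (exp (- x)) * exp (- x)" by simp
    have "isCont g (exp (- x))"
      by (rule continuous_on_interior[OF cont]) (use x in auto)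
    then have "isCont (\<lambda>x. g (exp (- x))) x"
      using continuous_at_compose[of x "\<lambda>x. exp (- x)" g] by (simp add: o_def)
    then show "isCont (\<lambda>x. g (exp (- x)) * exp (- x)) x"
      by (rule isCont_mult) simp
  next
    show "AE x in lborel. ereal 0 < ereal x \<longrightarrow> ereal x < \<infinity> \<longrightarrow> 0 \<le> g (exp (- x)) * exp (- x)"
      using nonneg by (intro AE_I2) auto
    have "((\<lambda>x. G (exp (- x))) \<longlongrightarrow> G 1) (at_right 0)"
    proof (rule continuous_within_tendsto_compose[OF G_cont])
      show "eventually (\<lambda>x. exp (- x) \<in> {0..1}) (at_right (0::real))"
        by (rule eventually_at_rightI[of 0 1]) auto
      show "((\<lambda>x::real. exp (- x)) \<longlongrightarrow> 1) (at_right 0)"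
        using tendsto_exp[OF tendsto_minus[OF tendsto_ident_at[of 0 "{0<..}"]]] by simp
    qed auto
    then show "((?F \<circ> real_of_ereal) \<longlongrightarrow> - G 1) (at_right (ereal 0))"
      unfolding ereal_tendsto_simps by (rule tendsto_minus)
    have "((\<lambda>x. G (exp (- x))) \<longlongrightarrow> G 0) at_top"
    proof (rule continuous_within_tendsto_compose[OF G_cont])
      show "eventually (\<lambda>x. exp (- x) \<in> {0..1}) (at_top :: real filter)"
        using eventually_ge_at_top[of "0::real"] by eventually_elim auto
      show "((\<lambda>x::real. exp (- x)) \<longlongrightarrow> 0) at_top"
        by (rule filterlim_compose[OF exp_at_bot filterlim_uminus_at_bot_at_top])
    qed auto
    then show "((?F \<circ> real_of_ereal) \<longlongrightarrow> - G 0) (at_left \<infinity>)"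
      unfolding ereal_tendsto_simps by (rule tendsto_minus)
  qed auto
  also have "\<dots> = G 1" by (simp add: G_def)
  also have "\<dots> = (LBINT y:{0..1}. g y)" unfolding G_def by (rule interval_integral_Icc) simp
  finally show ?thesis .
qed

lemma integral_exp_mult_exp_minus_one_power:
  fixes l :: real
  assumes "l \<noteq> 0"
  shows "(LBINT y:{0..1}. exp (l * y) * (exp (l * y) - 1) ^ k) = (exp l - 1) ^ Suc k / (real (Suc k) * l)"
proof -
  let ?F = "\<lambda>y. (exp (l * y) - 1) ^ Suc k / (real (Suc k) * l)"
  have "(LBINT y:{0..1}. exp (l * y) * (exp (l * y) - 1) ^ k) = (LBINT y=ereal 0..ereal 1. exp (l * y) * (exp (l * y) - 1) ^ k)"
    by (simp add: interval_integral_Icc)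
  also have "\<dots> = ?F 1 - ?F 0"
  proof (rule interval_integral_FTC_finite)
    fix y :: real
    have "DERIV (\<lambda>y. exp (l * y) - 1) y :> exp (l * y) * l"
      by (auto intro!: derivative_eq_intros)
    from DERIV_cdivide[OF DERIV_power[OF this, of "Suc k"], of "real (Suc k) * l"]
    have "DERIV ?F y :> exp (l * y) * (exp (l * y) - 1) ^ k"
      using assms by (simp add: field_simps del: of_nat_Suc)
    then show "(?F has_vector_derivative exp (l * y) * (exp (l * y) - 1) ^ k) (at y within {min 0 1..max 0 1})"
      by (simp add: has_real_derivative_iff_has_vector_derivative[symmetric] has_field_derivative_at_within)
  qed (intro continuous_intros)
  finally show ?thesis by simp
qed

lemma R1_eq_integral:
  assumes "l > 0"
  shows "R1 l (Suc (Suc m)) = exp (- l) * inverse (exp l - 1) ^ Suc m / 2 *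
           (LBINT y:{0..1}. I0 (2 * l * y) * (exp (l * y) - 1) ^ m
              + exp (l * y) * (exp (l * y) - 1) ^ Suc m - exp (l * y) * (exp (l * y) - 1) ^ m)"
proof -
  let ?K = "exp (- l) * inverse (exp l - 1) ^ Suc m / 2"
  let ?g = "\<lambda>y. ?K * (I0 (2 * l * y) * (exp (l * y) - 1) ^ m
              + exp (l * y) * (exp (l * y) - 1) ^ Suc m - exp (l * y) * (exp (l * y) - 1) ^ m)"
  have "a * u * c * ((exp z - 1)\<^sup>2 + I - 1) / 2 * (c * (exp z - 1)) ^ m
      = a * c ^ Suc m / 2 * (I * (exp z - 1) ^ m + exp z * (exp z - 1) ^ Suc m - exp z * (exp z - 1) ^ m) * u"
    for a u c z I :: real
  proof -
    have "a * u * c * (E\<^sup>2 + I - 1) / 2 * (c * E) ^ m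
        = a * c ^ Suc m / 2 * (I * E ^ m + (E + 1) * E ^ Suc m - (E + 1) * E ^ m) * u" for E
      by (simp add: power_mult_distrib power2_eq_square field_simps)
    from this[of "exp z - 1"] show ?thesis by simp
  qed
  then have "Lim (at 1) (EH l x) * LF l x ^ m = ?g (exp (- x)) * exp (- x)" if "x > 0" for x
    unfolding Lim_EH_at_1[OF assms that] LF_eq by (simp only: mult.assoc)
  then have "R1 l (Suc (Suc m)) = (LBINT x:{0<..}. ?g (exp (- x)) * exp (- x))"
    unfolding R1_def by (intro set_lebesgue_integral_cong) auto
  also have "\<dots> = (LBINT y:{0..1}. ?g y)"
  proof (rule set_integral_exp_minus_substitution)
    show "continuous_on {0..1} ?g" by (intro continuous_intros)
    fix y :: real assume "y \<in> {0..1}"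
    then have "0 \<le> exp (l * y) - 1" "1 \<le> I0 (2 * l * y)" using assms by (simp_all add: one_le_I0)
    then have "0 \<le> (I0 (2 * l * y) - 1 + (exp (l * y) - 1)\<^sup>2) * (exp (l * y) - 1) ^ m" by simp
    also have "\<dots> = I0 (2 * l * y) * (exp (l * y) - 1) ^ m
              + exp (l * y) * (exp (l * y) - 1) ^ Suc m - exp (l * y) * (exp (l * y) - 1) ^ m"
      by (simp add: algebra_simps power2_eq_square)
    finally show "0 \<le> ?g y" using assms by simp
  qed
  finally show ?thesis by simp
qed

lemma R1_integrand_integral:
  assumes "l > 0"
  shows "(LBINT y:{0..1}. I0 (2 * l * y) * (exp (l * y) - 1) ^ m
              + exp (l * y) * (exp (l * y) - 1) ^ Suc m - exp (l * y) * (exp (l * y) - 1) ^ m)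
         = (LBINT y:{0..1}. I0 (2 * l * y) * (exp (l * y) - 1) ^ m)
           + (exp l - 1) ^ Suc (Suc m) / (real (Suc (Suc m)) * l) - (exp l - 1) ^ Suc m / (real (Suc m) * l)"
proof -
  let ?f1 = "\<lambda>y. I0 (2 * l * y) * (exp (l * y) - 1) ^ m"
  let ?f2 = "\<lambda>y. exp (l * y) * (exp (l * y) - 1) ^ Suc m"
  let ?f3 = "\<lambda>y. exp (l * y) * (exp (l * y) - 1) ^ m"
  have int: "set_integrable lborel {0..1} ?f1" "set_integrable lborel {0..1} ?f2"
    "set_integrable lborel {0..1} ?f3"
    by (intro borel_integrable_atLeastAtMost' continuous_intros)+
  have "(LBINT y:{0..1}. ?f1 y + ?f2 y - ?f3 y)
      = (LBINT y:{0..1}. ?f1 y) + (LBINT y:{0..1}. ?f2 y) - (LBINT y:{0..1}. ?f3 y)"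
    by (simp only: set_integral_diff(2)[OF set_integral_add(1)[OF int(1,2)] int(3)]
        set_integral_add(2)[OF int(1,2)])
  then show ?thesis
    using assms by (simp only: integral_exp_mult_exp_minus_one_power)
qed

lemma Rinf_eq_integral:
  assumes "l > 0"
  shows "Rinf l (Suc (Suc m)) = exp (- l) * inverse (exp l - 1) ^ Suc m
           * (LBINT y:{0..1}. exp (l * y) * (exp (l * y) - 1) ^ Suc m)"
proof -
  let ?g = "\<lambda>y. exp (- l) * inverse (exp l - 1) ^ Suc m * (exp (l * y) * (exp (l * y) - 1) ^ Suc m)"
  have "Rinf l (Suc (Suc m)) = (LBINT x:{0<..}. ?g (exp (- x)) * exp (- x))"
    unfolding Rinf_def
    by (intro set_lebesgue_integral_cong) (auto simp: Lim_EH_at_top LF_eq assms power_mult_distrib mult_ac)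
  also have "\<dots> = (LBINT y:{0..1}. ?g y)"
    using assms by (intro set_integral_exp_minus_substitution continuous_intros) auto
  finally show ?thesis by simp
qed

lemma inverse_power_mult_power_cancel: "x \<noteq> 0 \<Longrightarrow> inverse x ^ k * x ^ k = (1 :: real)"
  unfolding power_mult_distrib[symmetric] by simp

lemma exp_minus_mult_exp_minus_one: "exp (- l) * (exp l - 1) = 1 - exp (- l :: real)"
  by (simp add: algebra_simps exp_minus_inverse)

lemma R1_eq:
  assumes "l > 0"
  shows "R1 l (Suc (Suc m)) = exp (- l) * inverse (exp l - 1) ^ Suc m / 2
             * (LBINT y:{0..1}. I0 (2 * l * y) * (exp (l * y) - 1) ^ m)
           + (1 - exp (- l)) / (2 * real (Suc (Suc m)) * l) - exp (- l) / (2 * real (Suc m) * l)"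
proof -
  let ?p = "inverse (exp l - 1) ^ Suc m" and ?q = "(exp l - 1) ^ Suc m"
  have cancel: "a * p / 2 * (J + q * X / (N * l) - q / (M * l)) = a * p / 2 * J + a * X / (2 * N * l) - a / (2 * M * l)"
    if "p * q = 1" for a p q J X N M :: real
    using that by (simp add: algebra_simps)
  have "R1 l (Suc (Suc m)) = exp (- l) * ?p / 2 * ((LBINT y:{0..1}. I0 (2 * l * y) * (exp (l * y) - 1) ^ m)
      + ?q * (exp l - 1) / (real (Suc (Suc m)) * l) - ?q / (real (Suc m) * l))"
    unfolding R1_eq_integral[OF assms] R1_integrand_integral[OF assms] power_Suc2[of "exp l - 1" "Suc m"] ..
  also have "\<dots> = exp (- l) * ?p / 2 * (LBINT y:{0..1}. I0 (2 * l * y) * (exp (l * y) - 1) ^ m)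
      + exp (- l) * (exp l - 1) / (2 * real (Suc (Suc m)) * l) - exp (- l) / (2 * real (Suc m) * l)"
    using assms by (intro cancel inverse_power_mult_power_cancel) simp
  finally show ?thesis unfolding exp_minus_mult_exp_minus_one .
qed

lemma Rinf_eq:
  assumes "l > 0"
  shows "Rinf l (Suc (Suc m)) = (1 - exp (- l)) / (real (Suc (Suc m)) * l)"
proof -
  let ?p = "inverse (exp l - 1) ^ Suc m" and ?q = "(exp l - 1) ^ Suc m"
  have cancel: "a * p * (q * X / D) = a * X / D" if "p * q = 1" for a p q X D :: real
    using that by (simp add: algebra_simps)
  have "Rinf l (Suc (Suc m)) = exp (- l) * ?p * (?q * (exp l - 1) / (real (Suc (Suc m)) * l))"
    unfolding Rinf_eq_integral[OF assms] power_Suc2[of "exp l - 1" "Suc m"]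
      integral_exp_mult_exp_minus_one_power[OF less_imp_neq[OF assms, symmetric]] ..
  also have "\<dots> = exp (- l) * (exp l - 1) / (real (Suc (Suc m)) * l)"
    using assms by (intro cancel inverse_power_mult_power_cancel) simp
  finally show ?thesis unfolding exp_minus_mult_exp_minus_one .
qed

theorem mainTheorem6:
  fixes l :: real and n :: nat
  assumes "l > 0" and "n \<ge> 2"
  shows "R1 l n =
           exp (- real n * l) / (2 * (1 - exp (- l)) ^ (n - 1))
             * (LBINT y:{0..1}. I0 (2 * l * y) * (exp (l * y) - 1) ^ (n - 2))
           + (exp (- l) + real n - 1) / (2 * real n * (real n - 1) * l)
           - exp (- l) / ((real n - 1) * l)
         \<and> Rinf l n = (1 - exp (- l)) / (real n * l)"
proof -
  obtain m where n: "n = Suc (Suc m)" using assms(2) by (metis add_2_eq_Suc le_Suc_ex)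
  have "exp (- real n * l) = exp (- l) * exp (- l) ^ Suc m"
    unfolding n by (simp add: exp_of_nat_mult[symmetric] algebra_simps exp_add[symmetric])
  then have K: "exp (- real n * l) / (2 * (1 - exp (- l)) ^ (n - 1)) = exp (- l) * inverse (exp l - 1) ^ Suc m / 2"
    unfolding n by (simp only: exp_minus_div_one_minus_exp_minus[symmetric] power_divide) simp
  have "(1 - a) / (2 * N * l) - a / (2 * (N - 1) * l) = (a + N - 1) / (2 * N * (N - 1) * l) - a / ((N - 1) * l)"
    if "N \<ge> 2" for a N :: real
  proof -
    have "N \<noteq> 0" "N - 1 \<noteq> 0" "l \<noteq> 0" using that assms(1) by auto
    then show ?thesis by (simp add: divide_simps) (simp add: algebra_simps)
  qed
  from this[of "real n" "exp (- l)"] show ?thesis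
    using R1_eq[OF assms(1), of m] Rinf_eq[OF assms(1), of m] unfolding K by (simp add: n)
qed

end
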